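(* Let $U$ be a finite set, $d$ an $\alpha$-relaxed semi-metric distance on $U$ with $\alpha\ge 1$, $\mathcal{M}=\langle U,\mathcal{F}\rangle$ a matroid, and $S,O$ two bases of $\mathcal{M}$. Let $A=O\cap S$, $B=S\setminus A=\{b_1,\dots,b_t\}$, $C=O\setminus A$, and let $g:B\to C$ be a bijection such that $S-b+g(b)\in\mathcal{F}$ for every $b\in B$; set $c_i=g(b_i)$. If $t>2$, then $$\alpha\Big(d(B,C)-\sum_{i=1}^t d(b_i,c_i)\Big)\;\ge\; d(C).$$
   Context: An $\alpha$-relaxed semi-metric distance on $U$ (with $\alpha\ge 1$) is a function $d:U\times U\to\mathbb{R}_{\ge 0}$ with $d(u,v)=d(v,u)$, $d(u,u)=0$, satisfying $d(u,v)\le \alpha\,(d(v,w)+d(w,u))$ for all $u,v,w\in U$. For $X\subseteq U$, $d(X)=\sum_{\{u,v\}\subseteq X,\,u\ne v} d(u,v)$; for disjoint $X,Y$, $d(X,Y)=\sum_{x\in X,y\in Y} d(x,y)$. $S-b+c$ denotes $(S\setminus\{b\})\cup\{c\}$. *)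

theory Defs
  imports Complex_Main
begin

definition relaxed_semimetric :: "'a set \<Rightarrow> ('a \<Rightarrow> 'a \<Rightarrow> real) \<Rightarrow> real \<Rightarrow> bool" where
  "relaxed_semimetric U d \<alpha> \<longleftrightarrow> \<alpha> \<ge> 1 \<and>
     (\<forall>u\<in>U. \<forall>v\<in>U. d u v \<ge> 0 \<and> d u v = d v u) \<and>
     (\<forall>u\<in>U. d u u = 0) \<and>
     (\<forall>u\<in>U. \<forall>v\<in>U. \<forall>w\<in>U. d u v \<le> \<alpha> * (d v w + d w u))"

definition matroid :: "'a set \<Rightarrow> 'a set set \<Rightarrow> bool" where
  "matroid U F \<longleftrightarrow> finite U \<and> F \<subseteq> Pow U \<and> {} \<in> F \<and>
     (\<forall>X Y. Y \<in> F \<and> X \<subseteq> Y \<longrightarrow> X \<in> F) \<and>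
     (\<forall>X\<in>F. \<forall>Y\<in>F. card X < card Y \<longrightarrow> (\<exists>y\<in>Y - X. insert y X \<in> F))"

definition basis :: "'a set set \<Rightarrow> 'a set \<Rightarrow> bool" where
  "basis F S \<longleftrightarrow> S \<in> F \<and> (\<forall>X\<in>F. S \<subseteq> X \<longrightarrow> X = S)"

definition dcross :: "('a \<Rightarrow> 'a \<Rightarrow> real) \<Rightarrow> 'a set \<Rightarrow> 'a set \<Rightarrow> real" where
  "dcross d X Y = (\<Sum>x\<in>X. \<Sum>y\<in>Y. d x y)"

(* d(X) = sum over unordered pairs {u,v} of distinct elements of X of d(u,v);
   written as half the sum over ordered pairs (d is symmetric on U) *)
definition dset :: "('a \<Rightarrow> 'a \<Rightarrow> real) \<Rightarrow> 'a set \<Rightarrow> real" where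
  "dset d X = (\<Sum>u\<in>X. \<Sum>v\<in>X. if u \<noteq> v then d u v else 0) / 2"

end

theory Submission
  imports Defs
begin

text \<open>Only the relaxed triangle inequality matters; the matroid hypotheses serve only to place
  \<open>B\<close> and \<open>C\<close> inside \<open>U\<close>. Writing \<open>c\<^sub>i = g(b\<^sub>i)\<close> and \<open>t = |B|\<close>, for distinct \<open>i, j\<close> every one of the \<open>t - 2\<close>
  indices \<open>k \<notin> {i, j}\<close> gives \<open>d(c\<^sub>i, c\<^sub>j) \<le> \<alpha> (d(b\<^sub>k, c\<^sub>j) + d(b\<^sub>k, c\<^sub>i))\<close>. Summing over all
  such triples, each off-diagonal term \<open>d(b\<^sub>k, c\<^sub>i)\<close> is counted \<open>2(t - 2)\<close> times, so
  \<open>(t - 2) \<cdot> 2 d(C) \<le> 2 \<alpha> (t - 2) (d(B, C) - \<Sum>\<^sub>i d(b\<^sub>i, c\<^sub>i))\<close>, and \<open>t > 2\<close> lets us cancel.\<close>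

lemma sum_offdiag_swap:
  assumes "finite I"
  shows "(\<Sum>i\<in>I. \<Sum>j\<in>I - {i}. f i j) = (\<Sum>j\<in>I. \<Sum>i\<in>I - {j}. f i j)"
proof -
  have "\<And>i. I - {i} = {j. j \<in> I \<and> i \<noteq> j}" "\<And>j. I - {j} = {i. i \<in> I \<and> i \<noteq> j}" by auto
  then show ?thesis using sum.swap_restrict[OF assms assms, of f "\<lambda>i j. i \<noteq> j"] by simp
qed

lemma sum_offdiag_split_diag:
  assumes "finite I"
  shows "(\<Sum>i\<in>I. \<Sum>j\<in>I. f i j) = (\<Sum>i\<in>I. f i i) + (\<Sum>i\<in>I. \<Sum>j\<in>I - {i}. f i j)"
  using assms by (simp add: sum.remove[of I] sum.distrib)

lemma sum_distinct_triples_count: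
  fixes h :: "'i \<Rightarrow> 'i \<Rightarrow> real"
  assumes "finite I"
  shows "(\<Sum>i\<in>I. \<Sum>j\<in>I - {i}. \<Sum>k\<in>I - {i, j}. h i k)
       = real (card I - 2) * (\<Sum>i\<in>I. \<Sum>k\<in>I - {i}. h i k)"
proof -
  have "(\<Sum>j\<in>I - {i}. \<Sum>k\<in>I - {i, j}. h i k) = real (card I - 2) * (\<Sum>k\<in>I - {i}. h i k)"
    if "i \<in> I" for i
  proof -
    have "(\<Sum>j\<in>I - {i}. \<Sum>k\<in>I - {i, j}. h i k) = (\<Sum>j\<in>I - {i}. \<Sum>k\<in>(I - {i}) - {j}. h i k)"
      by (intro sum.cong) auto
    also have "\<dots> = (\<Sum>k\<in>I - {i}. \<Sum>j\<in>(I - {i}) - {k}. h i k)"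
      using assms by (intro sum_offdiag_swap) simp
    also have "\<dots> = (\<Sum>k\<in>I - {i}. real (card I - 2) * h i k)"
    proof (intro sum.cong refl)
      fix k assume "k \<in> I - {i}"
      then have "card (I - {i} - {k}) = card I - 2"
        using assms that by (simp add: card_Diff_singleton_if)
      then show "(\<Sum>j\<in>I - {i} - {k}. h i k) = real (card I - 2) * h i k" by simp
    qed
    finally show ?thesis by (simp add: sum_distrib_left)
  qed
  then show ?thesis by (simp add: sum_distrib_left)
qed

lemma relaxed_semimetric_offdiag_bound:
  fixes b c :: "'i \<Rightarrow> 'a"
  assumes "finite I" and "card I > 2"
    and d: "relaxed_semimetric U d \<alpha>" and "b ` I \<subseteq> U" and "c ` I \<subseteq> U"
  shows "(\<Sum>i\<in>I. \<Sum>j\<in>I - {i}. d (c i) (c j)) \<le> 2 * \<alpha> * (\<Sum>i\<in>I. \<Sum>k\<in>I - {i}. d (b k) (c i))"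
proof -
  let ?t = "real (card I - 2)"
  have triangle: "d (c i) (c j) \<le> \<alpha> * (d (b k) (c i) + d (b k) (c j))"
    if "i \<in> I" "j \<in> I" "k \<in> I" for i j k
  proof -
    have "b k \<in> U" "c i \<in> U" "c j \<in> U" using assms(4,5) that by auto
    with d show ?thesis unfolding relaxed_semimetric_def by (metis add.commute)
  qed
  have card_remove_pair: "card (I - {i, j}) = card I - 2"
    if "i \<in> I" "j \<in> I" "j \<noteq> i" for i j
    using assms(1) that by (auto simp: card_Diff_subset card_insert_if numeral_2_eq_2)
  have "?t * (\<Sum>i\<in>I. \<Sum>j\<in>I - {i}. d (c i) (c j))
      = (\<Sum>i\<in>I. \<Sum>j\<in>I - {i}. \<Sum>k\<in>I - {i, j}. d (c i) (c j))"
    unfolding sum_distrib_left by (intro sum.cong[OF refl]) (simp add: card_remove_pair)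
  also have "\<dots> \<le> (\<Sum>i\<in>I. \<Sum>j\<in>I - {i}. \<Sum>k\<in>I - {i, j}. \<alpha> * (d (b k) (c i) + d (b k) (c j)))"
    by (intro sum_mono triangle) auto
  also have "\<dots> = \<alpha> * ((\<Sum>i\<in>I. \<Sum>j\<in>I - {i}. \<Sum>k\<in>I - {i, j}. d (b k) (c i))
                     + (\<Sum>i\<in>I. \<Sum>j\<in>I - {i}. \<Sum>k\<in>I - {i, j}. d (b k) (c j)))"
    by (simp add: sum_distrib_left sum.distrib distrib_left)
  also have "(\<Sum>i\<in>I. \<Sum>j\<in>I - {i}. \<Sum>k\<in>I - {i, j}. d (b k) (c j))
           = (\<Sum>j\<in>I. \<Sum>i\<in>I - {j}. \<Sum>k\<in>I - {j, i}. d (b k) (c j))"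
    using sum_offdiag_swap[OF assms(1), of "\<lambda>i j. \<Sum>k\<in>I - {i, j}. d (b k) (c j)"]
    by (simp add: insert_commute)
  also have "\<alpha> * ((\<Sum>i\<in>I. \<Sum>j\<in>I - {i}. \<Sum>k\<in>I - {i, j}. d (b k) (c i)) + \<dots>)
           = ?t * (2 * \<alpha> * (\<Sum>i\<in>I. \<Sum>k\<in>I - {i}. d (b k) (c i)))"
    using sum_distinct_triples_count[OF assms(1), of "\<lambda>i k. d (b k) (c i)"] by simp
  finally show ?thesis
    using assms(2) by (simp add: mult_le_cancel_left_pos)
qed

lemma dcross_bij_minus_diagonal:
  assumes "bij_betw g B C" and "finite B"
  shows "dcross d B C - (\<Sum>b\<in>B. d b (g b)) = (\<Sum>i\<in>B. \<Sum>k\<in>B - {i}. d k (g i))"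
proof -
  have "dcross d B C = (\<Sum>k\<in>B. \<Sum>i\<in>B. d k (g i))"
    unfolding dcross_def bij_betw_imp_surj_on[OF assms(1), symmetric]
    by (simp add: sum.reindex[OF bij_betw_imp_inj_on[OF assms(1)]])
  also have "\<dots> = (\<Sum>i\<in>B. \<Sum>k\<in>B. d k (g i))" by (rule sum.swap)
  finally show ?thesis using sum_offdiag_split_diag[OF assms(2), of "\<lambda>i k. d k (g i)"] by simp
qed

lemma dset_bij_image:
  assumes "bij_betw g B C" and "finite B"
  shows "dset d C = (\<Sum>i\<in>B. \<Sum>j\<in>B - {i}. d (g i) (g j)) / 2"
proof -
  have inj: "inj_on g B" and img: "g ` B = C"
    using assms(1) by (auto simp: bij_betw_def)
  have "(\<Sum>u\<in>C. \<Sum>v\<in>C. if u \<noteq> v then d u v else 0)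
      = (\<Sum>i\<in>B. \<Sum>j\<in>B. if g i \<noteq> g j then d (g i) (g j) else 0)"
    unfolding img[symmetric] by (simp add: sum.reindex[OF inj])
  also have "\<dots> = (\<Sum>i\<in>B. \<Sum>j\<in>B. if i \<noteq> j then d (g i) (g j) else 0)"
    using inj by (intro sum.cong refl) (auto simp: inj_on_def)
  also have "\<dots> = (\<Sum>i\<in>B. \<Sum>j\<in>B - {i}. d (g i) (g j))"
  proof (rule sum.cong[OF refl])
    fix i assume "i \<in> B"
    have "B \<inter> {j. i \<noteq> j} = B - {i}" by auto
    then show "(\<Sum>j\<in>B. if i \<noteq> j then d (g i) (g j) else 0) = (\<Sum>j\<in>B - {i}. d (g i) (g j))"
      using assms(2) by (simp add: sum.If_cases)
  qed
  finally show ?thesis unfolding dset_def by simp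
qed

theorem lemma4:
  fixes U :: "'a set" and d :: "'a \<Rightarrow> 'a \<Rightarrow> real" and \<alpha> :: real
    and F :: "'a set set" and S Opt A B C :: "'a set" and g :: "'a \<Rightarrow> 'a"
  assumes "finite U"
    and "relaxed_semimetric U d \<alpha>"
    and "matroid U F"
    and "basis F S" and "basis F Opt"
    and "A = Opt \<inter> S" and "B = S - A" and "C = Opt - A"
    and "bij_betw g B C"
    and "\<forall>b\<in>B. (S - {b}) \<union> {g b} \<in> F"
    and "card B > 2"
  shows "\<alpha> * (dcross d B C - (\<Sum>b\<in>B. d b (g b))) \<ge> dset d C"
proof -
  have "S \<subseteq> U" "Opt \<subseteq> U"
    using assms(3-5) unfolding matroid_def basis_def by auto
  then have "B \<subseteq> U" "C \<subseteq> U" using assms(7,8) by auto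
  moreover have "finite B" using \<open>B \<subseteq> U\<close> assms(1) finite_subset by blast
  moreover have "g ` B \<subseteq> U" using assms(9) \<open>C \<subseteq> U\<close> by (auto simp: bij_betw_def)
  ultimately have "(\<Sum>i\<in>B. \<Sum>j\<in>B - {i}. d (g i) (g j)) / 2 \<le> \<alpha> * (\<Sum>i\<in>B. \<Sum>k\<in>B - {i}. d k (g i))"
    using relaxed_semimetric_offdiag_bound[OF _ assms(11,2), of id g] by simp
  then show ?thesis
    using dset_bij_image[OF assms(9) \<open>finite B\<close>, of d]
      dcross_bij_minus_diagonal[OF assms(9) \<open>finite B\<close>, of d]
    by simp
qed

end
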